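(* For every $n\ge1$, the integral $\int_{[\mathrm{Hilb}^n(\mathbb{C}^4)]^{\mathrm{vir}}_T}e_{T\times\mathbb{C}^*_m}(L_m^{[n]})\in\mathbb{C}(s_1,s_2,s_3)[m]$ is divisible by $m$.
   Context: $T=\{t_1t_2t_3t_4=1\}\subset(\mathbb{C}^* )^4$ acting coordinatewise on $\mathbb{C}^4$, with parameters $s_i$, $\sum s_i=0$; $\mathbb{C}^*_m$ acts trivially with parameter $m$; $L_m=\mathcal{O}\otimes e^m$; $L_m^{[n]}=\pi_{M*}(\pi_X^*L_m\otimes\mathcal{O}_{\mathcal{Z}})$ is the tautological bundle on $\mathrm{Hilb}^n(\mathbb{C}^4)$. $[\mathrm{Hilb}^n(\mathbb{C}^4)]^{\mathrm{vir}}_T$ is the $T$-equivariant (Oh–Thomas) virtual class for any fixed choice of orientation, with integrals defined by localization. *)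

theory Defs
  imports "HOL-Computational_Algebra.Polynomial" "HOL-Computational_Algebra.Fraction_Field"
begin

(* C(s1,s2,s3): fraction field of C[s1,s2,s3], with C[s1,s2,s3] realised as nested
   univariate polynomials (s1 outermost, s3 innermost). *)
type_synonym rf = "complex poly poly poly fract"

definition s1 :: rf where "s1 = Fract [:0, 1:] 1"
definition s2 :: rf where "s2 = Fract [:[:0, 1:]:] 1"
definition s3 :: rf where "s3 = Fract [:[:[:0, 1:]:]:] 1"
(* s4 = -(s1+s2+s3) since s1+s2+s3+s4 = 0 *)

(* T-fixed points of Hilb^n(C^4): monomial ideals = solid partitions (finite
   down-closed sets of boxes in N^4); the box (a,b,c,d) is the monomial x1^a x2^b x3^c x4^d *)
definition solid_partition :: "(nat \<times> nat \<times> nat \<times> nat) set \<Rightarrow> bool" where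
  "solid_partition P \<longleftrightarrow> finite P \<and>
     (\<forall>a b c d a' b' c' d'. (a, b, c, d) \<in> P \<and> a' \<le> a \<and> b' \<le> b \<and> c' \<le> c \<and> d' \<le> d
        \<longrightarrow> (a', b', c', d') \<in> P)"

(* Character lattice of T = {t1 t2 t3 t4 = 1}: Z^4/(1,1,1,1) = Z^3, identified via
   t4 = (t1 t2 t3)^{-1}.  A virtual T-character is a finitely supported function
   Z^3 -> Z (coefficient of the monomial t1^i t2^j t3^k). *)
type_synonym tchar = "int \<times> int \<times> int \<Rightarrow> int"

definition box_mon :: "nat \<times> nat \<times> nat \<times> nat \<Rightarrow> int \<times> int \<times> int" where
  "box_mon = (\<lambda>(a, b, c, d). (int a - int d, int b - int d, int c - int d))"

definition add3 :: "int \<times> int \<times> int \<Rightarrow> int \<times> int \<times> int \<Rightarrow> int \<times> int \<times> int" where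
  "add3 = (\<lambda>(i, j, k) (i', j', k'). (i + i', j + j', k + k'))"

definition neg3 :: "int \<times> int \<times> int \<Rightarrow> int \<times> int \<times> int" where
  "neg3 = (\<lambda>(i, j, k). (- i, - j, - k))"

definition mon :: "int \<times> int \<times> int \<Rightarrow> tchar" where
  "mon x = (\<lambda>y. if y = x then 1 else 0)"

definition dualc :: "tchar \<Rightarrow> tchar" where
  "dualc f = (\<lambda>x. f (neg3 x))"

definition convc :: "tchar \<Rightarrow> tchar \<Rightarrow> tchar" where
  "convc f g = (\<lambda>x. \<Sum>y\<in>{y. f y \<noteq> 0}. f y * g (add3 x (neg3 y)))"

definition Zchar :: "(nat \<times> nat \<times> nat \<times> nat) set \<Rightarrow> tchar" where
  "Zchar P = (\<lambda>x. int (card {p \<in> P. box_mon p = x}))"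

definition Pbar123 :: tchar where
  "Pbar123 = convc (mon (0,0,0) - mon (-1,0,0))
              (convc (mon (0,0,0) - mon (0,-1,0)) (mon (0,0,0) - mon (0,0,-1)))"

(* half of the virtual tangent space T^vir_Z = Z + \<bar>Z - P Z \<bar>Z at Z:
   v_Z = Z - \<bar>P_123 Z \<bar>Z, so that v_Z + \<bar>v_Z = T^vir_Z *)
definition vertex :: "(nat \<times> nat \<times> nat \<times> nat) set \<Rightarrow> tchar" where
  "vertex P = Zchar P - convc Pbar123 (convc (Zchar P) (dualc (Zchar P)))"

definition weight :: "int \<times> int \<times> int \<Rightarrow> rf" where
  "weight = (\<lambda>(i, j, k). of_int i * s1 + of_int j * s2 + of_int k * s3)"

definition euler :: "tchar \<Rightarrow> rf" where
  "euler v = (\<Prod>x\<in>{x. v x \<noteq> 0}. weight x powi v x)"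

(* e_{T x C*_m}(L_m^{[n]}|_Z) = prod over boxes of (m + weight), as a polynomial in m *)
definition taut_euler :: "(nat \<times> nat \<times> nat \<times> nat) set \<Rightarrow> rf poly" where
  "taut_euler P = (\<Prod>p\<in>P. [: weight (box_mon p), 1 :])"

(* localization formula for the Oh-Thomas virtual integral; eps P \<in> {1,-1} is the
   sign at the fixed point P determined by the choice of orientation *)
definition hilb_integral :: "nat \<Rightarrow> ((nat \<times> nat \<times> nat \<times> nat) set \<Rightarrow> int) \<Rightarrow> rf poly" where
  "hilb_integral n eps =
     (\<Sum>P\<in>{P. solid_partition P \<and> card P = n}.
        smult (of_int (eps P) / euler (vertex P)) (taut_euler P))"

end

theory Submission
  imports Defs
begin

text \<open>Every nonempty monomial ideal contains the constant monomial 1, whose box has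
  weight 0. So at every fixed point the tautological bundle has a summand of weight exactly m,
  and each term of the localization sum is divisible by m, whatever the orientation signs.\<close>

lemma solid_partition_origin:
  assumes "solid_partition P" and "P \<noteq> {}"
  shows "(0, 0, 0, 0) \<in> P"
proof -
  from \<open>P \<noteq> {}\<close> obtain a b c d where "(a, b, c, d) \<in> P"
    by (metis prod_cases4 ex_in_conv)
  with \<open>solid_partition P\<close> show ?thesis
    unfolding solid_partition_def by blast
qed

lemma weight_box_mon_origin: "weight (box_mon (0, 0, 0, 0)) = 0"
  by (simp add: weight_def box_mon_def)

lemma monom_dvd_taut_euler:
  assumes "solid_partition P" and "P \<noteq> {}"
  shows "[:0, 1:] dvd taut_euler P"
proof -
  have "finite P"
    using \<open>solid_partition P\<close> unfolding solid_partition_def by blast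
  moreover have "(0, 0, 0, 0) \<in> P"
    using solid_partition_origin assms .
  ultimately have "[:weight (box_mon (0, 0, 0, 0)), 1:] dvd taut_euler P"
    unfolding taut_euler_def by (rule dvd_prodI)
  then show ?thesis
    by (simp add: weight_box_mon_origin)
qed

theorem lemma6p5:
  fixes n :: nat and eps :: "(nat \<times> nat \<times> nat \<times> nat) set \<Rightarrow> int"
  assumes "n \<ge> 1"
    and "\<forall>P. eps P = 1 \<or> eps P = -1"
  shows "[:0, 1:] dvd hilb_integral n eps"
  unfolding hilb_integral_def
proof (rule dvd_sum)
  fix P
  assume "P \<in> {P. solid_partition P \<and> card P = n}"
  then have "solid_partition P" and "P \<noteq> {}"
    using \<open>n \<ge> 1\<close> by auto
  then have "[:0, 1:] dvd taut_euler P"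
    by (rule monom_dvd_taut_euler)
  then show "[:0, 1:] dvd smult (of_int (eps P) / euler (vertex P)) (taut_euler P)"
    by (rule dvd_smult)
qed

end
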